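(* Let $K$ be a field, $c\in K\setminus\{0\}$ and $n\ge1$. There is a bijection between the set $\Psi_c^n$ of $c$-polygonal sequences of order $n$ and the set $\Psi_{-c}^n$ of $(-c)$-polygonal sequences of order $n$.
   Context: For a nonzero $a\in K$, the $a$-continuant polynomials $P_k^a$ ($k\ge-1$) are defined by $P_{-1}^a=0$, $P_0^a=1$, and for $k\ge1$, $P_k^a(x_1,\dots,x_k)=x_kP_{k-1}^a(x_1,\dots,x_{k-1})+aP_{k-2}^a(x_1,\dots,x_{k-2})$. A family $(x_i)_{i\in\mathbb{Z}}$ in $K$ is $n$-admissible (for $a$) if $P_{n+2}^a(x_i,\dots,x_{i+n+1})=0$ for all $i$. Let $\mathbb{B}_n=\{(i,j)\in\mathbb{Z}^2:-2\le j-i\le n+1\}$. An $a$-frieze of order $n$ is a function $f:\mathbb{B}_n\to K$ for which there is an $n$-admissible family $(x_i)$ (for $a$) with $f(i,j)=P^a_{j-i+1}(x_i,\dots,x_j)$ for all $(i,j)\in\mathbb{B}_n$. An $a$-polygonal sequence of order $n$ is a tuple $(f(m+1,m+1),f(m+2,m+2),\dots,f(m+n+3,m+n+3))\in K^{n+3}$ of $n+3$ consecutive first-row entries of some $a$-frieze $f$ of order $n$ (for some $m\in\mathbb{Z}$); $\Psi_a^n$ denotes the set of all of them. *)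

theory Defs
  imports Main
begin

text \<open>cont a x i k = P^a_k(x_i, x_(i+1), ..., x_(i+k-1)) for k >= 0.\<close>
fun cont :: "'a::field \<Rightarrow> (int \<Rightarrow> 'a) \<Rightarrow> int \<Rightarrow> nat \<Rightarrow> 'a" where
  "cont a x i 0 = 1"
| "cont a x i (Suc 0) = x i"
| "cont a x i (Suc (Suc k)) = x (i + int k + 1) * cont a x i (Suc k) + a * cont a x i k"

definition contz :: "'a::field \<Rightarrow> (int \<Rightarrow> 'a) \<Rightarrow> int \<Rightarrow> int \<Rightarrow> 'a" where
  "contz a x i k = (if k < 0 then 0 else cont a x i (nat k))"

definition admissible :: "'a::field \<Rightarrow> nat \<Rightarrow> (int \<Rightarrow> 'a) \<Rightarrow> bool" where
  "admissible a n x \<longleftrightarrow> (\<forall>i. cont a x i (n + 2) = 0)"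

definition Bn :: "nat \<Rightarrow> (int \<times> int) set" where
  "Bn n = {(i, j). -2 \<le> j - i \<and> j - i \<le> int n + 1}"

definition is_frieze :: "'a::field \<Rightarrow> nat \<Rightarrow> (int \<times> int \<Rightarrow> 'a) \<Rightarrow> bool" where
  "is_frieze a n f \<longleftrightarrow> (\<exists>x. admissible a n x \<and>
      (\<forall>i j. (i, j) \<in> Bn n \<longrightarrow> f (i, j) = contz a x i (j - i + 1)))"

definition Psi :: "'a::field \<Rightarrow> nat \<Rightarrow> 'a list set" where
  "Psi a n = {map (\<lambda>k. f (m + int k, m + int k)) [1..<n + 4] | f m. is_frieze a n f}"

end

theory Submission
  imports Defs
begin

text \<open>Twisting a family by alternating signs, \<open>x'\<^sub>j = \<plusminus>(-1)\<^sup>j x\<^sub>j\<close>, turns every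
  \<open>a\<close>-continuant into \<open>\<plusminus>\<close> the corresponding \<open>(-a)\<close>-continuant: in the recurrence
  \<open>P\<^sub>k = x\<^sub>k P\<^sub>k\<^sub>-\<^sub>1 + a P\<^sub>k\<^sub>-\<^sub>2\<close> the signs of consecutive terms differ by the sign of \<open>x\<^sub>k\<close>,
  while those two steps apart differ by \<open>-1\<close>, which is absorbed by \<open>a \<mapsto> -a\<close>.
  Hence the twist maps \<open>a\<close>-admissible families to \<open>(-a)\<close>-admissible ones, and on
  polygonal sequences (which are just windows of admissible families) it is an
  involution exchanging \<open>\<Psi>\<^sub>a\<^sup>n\<close> and \<open>\<Psi>\<^sub>-\<^sub>a\<^sup>n\<close>.\<close>

definition alt_sign :: "int \<Rightarrow> 'a::field" where
  "alt_sign j = (if even j then 1 else -1)"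

lemma alt_sign_add: "(alt_sign (j + int m) :: 'a::field) = alt_sign j * (-1) ^ m"
  by (induction m) (auto simp: alt_sign_def algebra_simps)

lemma alt_sign_mult_self [simp]: "(alt_sign j :: 'a::field) * alt_sign j = 1"
  by (simp add: alt_sign_def)

definition sign_twist :: "int \<Rightarrow> (int \<Rightarrow> 'a::field) \<Rightarrow> int \<Rightarrow> 'a" where
  "sign_twist t x j = alt_sign (j + t) * x j"

text \<open>The sign by which the twist multiplies a continuant of length \<open>k\<close> whose
  first entry carries the sign \<open>u\<close>.\<close>
fun twist_factor :: "'a::field \<Rightarrow> nat \<Rightarrow> 'a" where
  "twist_factor u 0 = 1"
| "twist_factor u (Suc k) = u * (-1) ^ k * twist_factor u k"

lemma twist_factor_Suc_Suc:
  assumes "u * u = 1"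
  shows "twist_factor u (Suc (Suc k)) = - twist_factor u k"
proof -
  have "twist_factor u (Suc (Suc k)) = (u * u) * ((-1) ^ Suc k * (-1) ^ k) * twist_factor u k"
    by (simp add: algebra_simps)
  also have "(-1::'a) ^ Suc k * (-1) ^ k = -1"
    by (simp flip: power_add power_Suc)
  finally show ?thesis
    using assms by simp
qed

lemma cont_sign_twist:
  "cont (-a) (sign_twist t x) i k = twist_factor (alt_sign (i + t)) k * cont a x i k"
proof (induction a x i k rule: cont.induct)
  case (3 a x i k)
  let ?u = "alt_sign (i + t) :: 'a"
  let ?s = "twist_factor ?u"
  have "alt_sign (i + int k + 1 + t) = ?u * (-1) ^ Suc k"
    using alt_sign_add[of "i + t" "Suc k"] by (simp add: algebra_simps)
  then have sign_next: "alt_sign (i + int k + 1 + t) * ?s (Suc k) = ?s (Suc (Suc k))"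
    by simp
  have "cont (-a) (sign_twist t x) i (Suc (Suc k))
      = sign_twist t x (i + int k + 1) * cont (-a) (sign_twist t x) i (Suc k)
        + (-a) * cont (-a) (sign_twist t x) i k"
    by simp
  also have "\<dots> = (alt_sign (i + int k + 1 + t) * ?s (Suc k)) * x (i + int k + 1) * cont a x i (Suc k)
        + a * (- ?s k) * cont a x i k"
    by (simp only: 3 sign_twist_def) (simp add: algebra_simps)
  also have "\<dots> = ?s (Suc (Suc k)) * cont a x i (Suc (Suc k))"
    by (simp only: sign_next twist_factor_Suc_Suc[OF alt_sign_mult_self, symmetric])
       (simp add: algebra_simps)
  finally show ?case .
qed (simp_all add: sign_twist_def)

lemma admissible_sign_twist:
  "admissible a n x \<Longrightarrow> admissible (-a) n (sign_twist t x)"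
  unfolding admissible_def cont_sign_twist by simp

lemma Psi_eq_windows:
  "Psi a n = {map (\<lambda>k. x (m + int k)) [1..<n + 4] | x m. admissible a n x}"
proof (intro equalityI subsetI)
  fix l assume "l \<in> Psi a n"
  then obtain f m x where l: "l = map (\<lambda>k. f (m + int k, m + int k)) [1..<n + 4]"
    and adm: "admissible a n x"
    and f: "\<forall>i j. (i, j) \<in> Bn n \<longrightarrow> f (i, j) = contz a x i (j - i + 1)"
    unfolding Psi_def is_frieze_def by blast
  have "f (i, i) = x i" for i
    using f by (simp add: Bn_def contz_def)
  with l adm show "l \<in> {map (\<lambda>k. x (m + int k)) [1..<n + 4] | x m. admissible a n x}"
    by auto
next
  fix l assume "l \<in> {map (\<lambda>k. x (m + int k)) [1..<n + 4] | x m. admissible a n x}"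
  then obtain x m where l: "l = map (\<lambda>k. x (m + int k)) [1..<n + 4]"
    and adm: "admissible a n x"
    by blast
  define f where "f = (\<lambda>(i, j). contz a x i (j - i + 1))"
  have "is_frieze a n f"
    unfolding is_frieze_def f_def using adm by auto
  moreover have "l = map (\<lambda>k. f (m + int k, m + int k)) [1..<n + 4]"
    by (simp add: l f_def contz_def)
  ultimately show "l \<in> Psi a n"
    unfolding Psi_def by blast
qed

definition alternate_signs :: "'a::field list \<Rightarrow> 'a list" where
  "alternate_signs l = map (\<lambda>p. alt_sign (int p) * l ! p) [0..<length l]"

lemma alternate_signs_involution: "alternate_signs (alternate_signs l) = (l :: 'a::field list)"
  by (rule nth_equalityI) (auto simp: alternate_signs_def mult.assoc[symmetric])

lemma alternate_signs_Psi:
  assumes "l \<in> Psi a n"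
  shows "alternate_signs l \<in> Psi (-a) n"
proof -
  obtain x m where l: "l = map (\<lambda>k. x (m + int k)) [1..<n + 4]"
    and adm: "admissible a n x"
    using assms unfolding Psi_eq_windows by blast
  let ?x' = "sign_twist (- m - 1) x"
  have "alternate_signs l = map (\<lambda>k. ?x' (m + int k)) [1..<n + 4]"
    by (rule nth_equalityI) (auto simp: alternate_signs_def l sign_twist_def algebra_simps)
  with admissible_sign_twist[OF adm] show ?thesis
    unfolding Psi_eq_windows by blast
qed

theorem mainTheorem14:
  fixes c :: "'a::field" and n :: nat
  assumes "c \<noteq> 0" and "1 \<le> n"
  shows "\<exists>g. bij_betw g (Psi c n) (Psi (- c) n)"
proof
  show "bij_betw alternate_signs (Psi c n) (Psi (- c) n)"
    by (rule bij_betw_byWitness[where f' = alternate_signs])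
       (auto simp: alternate_signs_involution intro: alternate_signs_Psi
             dest: alternate_signs_Psi[where a = "-c"])
qed

end
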